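(* Let $G$ be a tricyclic graph with at least one pendant vertex whose base $\widetilde G$ consists of three cycles that pairwise have exactly one vertex $u$ in common (i.e. $\widetilde G$ is the union of three cycles sharing only the single vertex $u$). Then $G\notin\mathscr{G}_{a,b}$ for all integers $a,b$.
   Context: All graphs are simple and connected; $d_G(v)$ is the degree of $v$, $N_G(v)$ its neighbourhood. A tricyclic graph is a connected graph with $|E_G|=|V_G|+2$. For integers $a,b$, $\mathscr{G}_{a,b}$ is the set of connected graphs $G$ such that for every $v\in V_G$, $\sum_{u\in N_G(v)}d_G(u)=a\,d_G(v)+b-d_G(v)^2$ (equivalently, $G$ is connected and its signless Laplacian $D+A$ has exactly two main eigenvalues with parameters $a,b$). A pendant vertex is a vertex of degree $1$. The base $\widetilde{G}$ of $G$ is the subgraph obtained from $G$ by repeatedly deleting pendant vertices until none remain. *)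

theory Defs
  imports Main
begin

definition simple_graph :: "'a set \<Rightarrow> ('a \<Rightarrow> 'a \<Rightarrow> bool) \<Rightarrow> bool" where
  "simple_graph V E \<longleftrightarrow> finite V \<and> (\<forall>x y. E x y \<longrightarrow> E y x) \<and> (\<forall>x. \<not> E x x)
     \<and> (\<forall>x y. E x y \<longrightarrow> x \<in> V \<and> y \<in> V)"

definition edges :: "'a set \<Rightarrow> ('a \<Rightarrow> 'a \<Rightarrow> bool) \<Rightarrow> 'a set set" where
  "edges V E = {{x, y} | x y. x \<in> V \<and> y \<in> V \<and> E x y}"

definition connected_graph :: "'a set \<Rightarrow> ('a \<Rightarrow> 'a \<Rightarrow> bool) \<Rightarrow> bool" where
  "connected_graph V E \<longleftrightarrow> V \<noteq> {} \<and>
     (\<forall>x\<in>V. \<forall>y\<in>V. (\<lambda>a b. a \<in> V \<and> b \<in> V \<and> E a b)\<^sup>*\<^sup>* x y)"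

definition nbhd :: "'a set \<Rightarrow> ('a \<Rightarrow> 'a \<Rightarrow> bool) \<Rightarrow> 'a \<Rightarrow> 'a set" where
  "nbhd V E v = {u \<in> V. E v u}"

definition deg :: "'a set \<Rightarrow> ('a \<Rightarrow> 'a \<Rightarrow> bool) \<Rightarrow> 'a \<Rightarrow> nat" where
  "deg V E v = card (nbhd V E v)"

definition tricyclic :: "'a set \<Rightarrow> ('a \<Rightarrow> 'a \<Rightarrow> bool) \<Rightarrow> bool" where
  "tricyclic V E \<longleftrightarrow> simple_graph V E \<and> connected_graph V E \<and> card (edges V E) = card V + 2"

definition pendant :: "'a set \<Rightarrow> ('a \<Rightarrow> 'a \<Rightarrow> bool) \<Rightarrow> 'a \<Rightarrow> bool" where
  "pendant V E v \<longleftrightarrow> v \<in> V \<and> deg V E v = 1"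

definition in_Gab :: "'a set \<Rightarrow> ('a \<Rightarrow> 'a \<Rightarrow> bool) \<Rightarrow> int \<Rightarrow> int \<Rightarrow> bool" where
  "in_Gab V E a b \<longleftrightarrow> connected_graph V E \<and>
     (\<forall>v\<in>V. (\<Sum>u\<in>nbhd V E v. int (deg V E u))
              = a * int (deg V E v) + b - int (deg V E v) ^ 2)"

definition prune_step :: "('a \<Rightarrow> 'a \<Rightarrow> bool) \<Rightarrow> 'a set \<Rightarrow> 'a set \<Rightarrow> bool" where
  "prune_step E W W' \<longleftrightarrow> (\<exists>v. pendant W E v \<and> W' = W - {v})"

definition is_base :: "'a set \<Rightarrow> ('a \<Rightarrow> 'a \<Rightarrow> bool) \<Rightarrow> 'a set \<Rightarrow> bool" where
  "is_base V E W \<longleftrightarrow> (prune_step E)\<^sup>*\<^sup>* V W \<and> \<not> (\<exists>v. pendant W E v)"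

definition cycle_edges :: "'a list \<Rightarrow> 'a set set" where
  "cycle_edges c = {{c ! i, c ! ((i + 1) mod length c)} | i. i < length c}"

definition is_cycle_list :: "'a list \<Rightarrow> bool" where
  "is_cycle_list c \<longleftrightarrow> distinct c \<and> length c \<ge> 3"

end

theory Submission
  imports Defs
begin

text \<open>
Pruning the pendant vertices exhibits \<open>G\<close> as its base \<open>W\<close> with trees hanging from it. The
defining condition at a leaf forces the neighbour of the leaf to have degree \<open>k = a + b - 1\<close>,
and the condition at that neighbour then forces \<open>b < 0\<close>. A tree vertex of minimal height among
those with children has only leaves as children, hence degree \<open>k\<close>, which pins the degree of its
parent to \<open>z = ak + b - k\<^sup>2 - k + 1\<close>; but then the condition at the parent fails, since
\<open>(az + b - z\<^sup>2) - (z + k - 1) = -b(k - 1)(k - 2)(1 + b) \<le> 0\<close>. So every tree vertex is a leaf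
attached to a base vertex of degree \<open>k \<ge> 3\<close>. On the three cycles through \<open>u\<close> this leaves the
degrees \<open>2\<close> and \<open>k\<close> away from \<open>u\<close> and \<open>6\<close> or \<open>k\<close> at \<open>u\<close>; the conditions at the neighbours
of \<open>u\<close>, at \<open>u\<close> itself, and summed over the base (where double counting cancels the
neighbour sums) have no integer solution.
\<close>

lemma sum_two_valued:
  fixes g :: "'b \<Rightarrow> 'c::comm_semiring_1"
  assumes "finite X" and "\<forall>v\<in>X. f v = p \<or> f v = q"
  shows "(\<Sum>v\<in>X. g (f v))
           = g p * of_nat (card {v\<in>X. f v = p}) + g q * of_nat (card {v\<in>X. f v \<noteq> p})"
proof -
  have "(\<Sum>v\<in>X. g (f v)) = (\<Sum>v\<in>{v\<in>X. f v = p}. g (f v)) + (\<Sum>v\<in>{v\<in>X. f v \<noteq> p}. g (f v))"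
    using assms(1) by (subst sum.union_disjoint[symmetric]) (auto intro: sum.cong)
  also have "\<dots> = (\<Sum>v\<in>{v\<in>X. f v = p}. g p) + (\<Sum>v\<in>{v\<in>X. f v \<noteq> p}. g q)"
    using assms(2) by (intro arg_cong2[where f = "(+)"] sum.cong) auto
  finally show ?thesis by (simp add: mult.commute)
qed

lemma sum_nbhd_swap:
  fixes g :: "'a \<Rightarrow> 'b::comm_semiring_1"
  assumes "finite W" and "\<And>x y. E x y \<Longrightarrow> E y x"
  shows "(\<Sum>w\<in>W. \<Sum>x\<in>nbhd W E w. g x) = (\<Sum>x\<in>W. of_nat (deg W E x) * g x)"
proof -
  have "(\<Sum>w\<in>W. \<Sum>x\<in>nbhd W E w. g x) = (\<Sum>w\<in>W. \<Sum>x\<in>W. if E w x then g x else 0)"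
    using assms(1) by (simp add: nbhd_def sum.inter_filter)
  also have "\<dots> = (\<Sum>x\<in>W. \<Sum>w\<in>W. if E w x then g x else 0)"
    by (rule sum.swap)
  also have "\<dots> = (\<Sum>x\<in>W. \<Sum>w\<in>W. if E x w then g x else 0)"
    using assms(2) by (intro sum.cong refl) (metis (full_types))
  also have "\<dots> = (\<Sum>x\<in>W. of_nat (deg W E x) * g x)"
    using assms(1) by (simp add: deg_def nbhd_def sum.inter_filter[symmetric])
  finally show ?thesis .
qed

lemma mod_pred_eq:
  fixes i L :: nat
  assumes "i < L"
  shows "(i + L - 1) mod L = (if i = 0 then L - 1 else i - 1)"
  using assms by (cases i) (simp_all add: mod_if)

lemma mod_succ_eq:
  fixes i L :: nat
  assumes "i < L"
  shows "(i + 1) mod L = (if i + 1 = L then 0 else i + 1)"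
  using assms by (simp add: mod_if)

lemma cycle_edgesE:
  assumes "e \<in> cycle_edges c"
  obtains j where "j < length c" "e = {c!j, c!((j + 1) mod length c)}"
  using assms unfolding cycle_edges_def mem_Collect_eq by (elim exE conjE) simp

lemma cycle_edges_neighbours:
  assumes c: "is_cycle_list c" and i: "i < length c"
  shows "{x. {c!i, x} \<in> cycle_edges c}
           = {c ! ((i + 1) mod length c), c ! ((i + length c - 1) mod length c)}"
proof -
  let ?L = "length c"
  define j where "j = (i + ?L - 1) mod ?L"
  have L: "3 \<le> ?L" and dist: "distinct c" using c by (auto simp: is_cycle_list_def)
  have j_eq: "j = (if i = 0 then ?L - 1 else i - 1)" using mod_pred_eq[OF i] by (simp add: j_def)
  have j: "j < ?L" "(j + 1) mod ?L = i"
    using i L unfolding j_eq by auto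
  have j_unique: "j' = j" if "j' < ?L" "(j' + 1) mod ?L = i" for j'
    using that i unfolding j_eq mod_succ_eq[OF that(1)] by (cases "j' + 1 = ?L") auto
  have "x = c ! ((i + 1) mod ?L) \<or> x = c ! j" if edge: "{c!i, x} \<in> cycle_edges c" for x
  proof -
    obtain j' where j': "j' < ?L" "{c!i, x} = {c!j', c!((j' + 1) mod ?L)}"
      using edge by (rule cycle_edgesE)
    have "(j' + 1) mod ?L < ?L" using L by (intro mod_less_divisor) linarith
    with j' consider "c!i = c!j'" "x = c!((j' + 1) mod ?L)" | "c!i = c!((j' + 1) mod ?L)" "x = c!j'"
      unfolding doubleton_eq_iff by blast
    then show ?thesis
    proof cases
      case 1
      then have "i = j'" using nth_eq_iff_index_eq[OF dist i j'(1)] by blast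
      then show ?thesis using 1 by simp
    next
      case 2
      then have "i = (j' + 1) mod ?L" using nth_eq_iff_index_eq[OF dist i] \<open>(j' + 1) mod ?L < ?L\<close> by blast
      then have "j' = j" using j_unique[OF j'(1)] by simp
      then show ?thesis using 2 by simp
    qed
  qed
  moreover have "{c!i, c!((i + 1) mod ?L)} \<in> cycle_edges c" "{c!i, c!j} \<in> cycle_edges c"
  proof -
    show "{c!i, c!((i + 1) mod ?L)} \<in> cycle_edges c"
      using i unfolding cycle_edges_def by blast
    have "{c!i, c!j} = {c!j, c!((j + 1) mod ?L)}" using j(2) by (simp add: insert_commute)
    then show "{c!i, c!j} \<in> cycle_edges c" using j(1) unfolding cycle_edges_def by blast
  qed
  ultimately show ?thesis unfolding j_def by blast
qed

lemma cycle_edges_neighbours_of_mem: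
  assumes c: "is_cycle_list c" and w: "w \<in> set c"
  shows "card {x. {w, x} \<in> cycle_edges c} = 2"
    and "{x. {w, x} \<in> cycle_edges c} \<subseteq> set c - {w}"
proof -
  let ?L = "length c"
  obtain i where i: "i < ?L" "w = c!i" using w by (auto simp: in_set_conv_nth)
  have L: "3 \<le> ?L" and dist: "distinct c" using c by (auto simp: is_cycle_list_def)
  have idx: "(i + 1) mod ?L \<noteq> (i + ?L - 1) mod ?L" "(i + 1) mod ?L \<noteq> i"
    "(i + ?L - 1) mod ?L \<noteq> i" "(i + 1) mod ?L < ?L" "(i + ?L - 1) mod ?L < ?L"
    using i L unfolding mod_pred_eq[OF i(1)] mod_succ_eq[OF i(1)] by auto
  then have "c ! ((i + 1) mod ?L) \<noteq> c ! ((i + ?L - 1) mod ?L)" "c ! ((i + 1) mod ?L) \<noteq> c ! i"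
    "c ! ((i + ?L - 1) mod ?L) \<noteq> c ! i"
    using nth_eq_iff_index_eq[OF dist] i(1) by metis+
  then show "card {x. {w, x} \<in> cycle_edges c} = 2" "{x. {w, x} \<in> cycle_edges c} \<subseteq> set c - {w}"
    unfolding i(2) cycle_edges_neighbours[OF c i(1)] using idx(4,5) by auto
qed

lemma cycle_edges_neighbours_notin:
  assumes "w \<notin> set c"
  shows "{x. {w, x} \<in> cycle_edges c} = {}"
proof -
  have False if edge: "{w, x} \<in> cycle_edges c" for x
  proof -
    obtain j where j: "j < length c" "{w, x} = {c!j, c!((j + 1) mod length c)}"
      using edge by (rule cycle_edgesE)
    have "(j + 1) mod length c < length c" using j(1) by (intro mod_less_divisor) linarith
    then show False using j assms unfolding doubleton_eq_iff by auto
  qed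
  then show ?thesis by blast
qed

lemma nbhd_eq_edges_neighbours:
  assumes "\<And>x y. E x y \<Longrightarrow> E y x" "w \<in> W"
  shows "nbhd W E w = {x. {w, x} \<in> edges W E}"
proof (intro set_eqI iffI)
  fix x assume "x \<in> {x. {w, x} \<in> edges W E}"
  then obtain p q where "{w, x} = {p, q}" "p \<in> W" "q \<in> W" "E p q"
    by (auto simp: edges_def)
  then show "x \<in> nbhd W E w" using assms(1) by (auto simp: nbhd_def doubleton_eq_iff)
qed (use assms(2) in \<open>auto simp: nbhd_def edges_def\<close>)

lemma deg_three_cycles_one_common_vertex:
  assumes sym: "\<And>x y. E x y \<Longrightarrow> E y x"
    and c: "is_cycle_list c1" "is_cycle_list c2" "is_cycle_list c3"
    and common: "set c1 \<inter> set c2 = {u}" "set c1 \<inter> set c3 = {u}" "set c2 \<inter> set c3 = {u}"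
    and W: "W = set c1 \<union> set c2 \<union> set c3"
    and edges: "edges W E = cycle_edges c1 \<union> cycle_edges c2 \<union> cycle_edges c3"
    and w: "w \<in> W"
  shows "deg W E w = (if w = u then 6 else 2)"
proof -
  let ?N = "\<lambda>c. {x. {w, x} \<in> cycle_edges c}"
  have nbhd: "nbhd W E w = ?N c1 \<union> ?N c2 \<union> ?N c3"
    using nbhd_eq_edges_neighbours[OF sym w] edges by auto
  show ?thesis
  proof (cases "w = u")
    case True
    then have "w \<in> set c1" "w \<in> set c2" "w \<in> set c3" using common by auto
    note N1 = cycle_edges_neighbours_of_mem[OF c(1) this(1)]
      and N2 = cycle_edges_neighbours_of_mem[OF c(2) this(2)]
      and N3 = cycle_edges_neighbours_of_mem[OF c(3) this(3)]
    have fin: "finite (?N c1)" "finite (?N c2)" "finite (?N c3)"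
      using N1(1) N2(1) N3(1) by (auto intro: card_ge_0_finite)
    have "?N c1 \<inter> ?N c2 = {}" "(?N c1 \<union> ?N c2) \<inter> ?N c3 = {}"
      using N1(2) N2(2) N3(2) common True by blast+
    then show ?thesis
      unfolding deg_def nbhd using fin N1(1) N2(1) N3(1) True by (simp add: card_Un_disjoint)
  next
    case False
    then consider "w \<in> set c1" "w \<notin> set c2" "w \<notin> set c3" | "w \<notin> set c1" "w \<in> set c2" "w \<notin> set c3"
      | "w \<notin> set c1" "w \<notin> set c2" "w \<in> set c3"
      using w W common by blast
    then show ?thesis
      unfolding deg_def nbhd using False c
      by cases (simp_all add: cycle_edges_neighbours_notin cycle_edges_neighbours_of_mem)
  qed
qed

text \<open>
\<open>V - W\<close> is a forest hanging from \<open>W\<close>: \<open>par\<close> is the parent map, and \<open>rk\<close> certifies that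
iterating it from a tree vertex reaches \<open>W\<close>.
\<close>

locale hanging_trees =
  fixes V :: "'a set" and E :: "'a \<Rightarrow> 'a \<Rightarrow> bool" and W :: "'a set"
    and par :: "'a \<Rightarrow> 'a" and rk :: "'a \<Rightarrow> nat"
  assumes finite_V: "finite V"
    and sym: "E x y \<Longrightarrow> E y x"
    and irrefl: "\<not> E x x"
    and base_subset: "W \<subseteq> V"
    and par_mem: "x \<in> V - W \<Longrightarrow> par x \<in> V"
    and adj_par: "x \<in> V - W \<Longrightarrow> E x (par x)"
    and rk_less_par: "x \<in> V - W \<Longrightarrow> par x \<in> V - W \<Longrightarrow> rk x < rk (par x)"
    and adj_tree_vertex: "x \<in> V - W \<Longrightarrow> y \<in> V \<Longrightarrow> E x y \<Longrightarrow> y = par x \<or> (y \<in> V - W \<and> par y = x)"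

lemma pruning_hangs_trees:
  assumes "(prune_step E)\<^sup>*\<^sup>* A B" and "finite A"
    and irrefl: "\<And>x. \<not> E x x" and sym: "\<And>x y. E x y \<Longrightarrow> E y x"
  shows "\<exists>par rk. hanging_trees A E B par rk"
  using assms(1,2)
proof (induction rule: converse_rtranclp_induct)
  case base
  have "hanging_trees B E B id (\<lambda>_. 0)"
    using base sym irrefl by unfold_locales auto
  then show ?case by blast
next
  case (step A A')
  obtain v where v: "pendant A E v" and A': "A' = A - {v}"
    using step.hyps(1) by (auto simp: prune_step_def)
  obtain p where p: "nbhd A E v = {p}"
    using v by (auto simp: pendant_def deg_def card_Suc_eq)
  have vA: "v \<in> A" and pA: "p \<in> A" and Evp: "E v p" and pv: "p \<noteq> v"
    using v p irrefl by (auto simp: pendant_def nbhd_def)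
  have nbr_v: "y = p" if "y \<in> A" "E v y" for y
    using p that by (auto simp: nbhd_def)
  obtain par rk where "hanging_trees A' E B par rk"
    using step.IH step.prems A' by auto
  then interpret T: hanging_trees A' E B par rk .
  define par' where "par' = par(v := p)"
  define rk' where "rk' x = (if x = v then 0 else Suc (rk x))" for x
  have "hanging_trees A E B par' rk'"
  proof
    fix x assume x: "x \<in> A - B"
    show "par' x \<in> A" "E x (par' x)"
      using x A' pA Evp T.par_mem[of x] T.adj_par[of x] by (auto simp: par'_def)
    show "rk' x < rk' (par' x)" if "par' x \<in> A - B"
      using x that A' pv T.rk_less_par[of x] T.par_mem[of x] by (auto simp: par'_def rk'_def)
    show "y = par' x \<or> (y \<in> A - B \<and> par' y = x)" if "y \<in> A" "E x y" for y
    proof (cases "x = v")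
      case True
      then show ?thesis using nbr_v that by (simp add: par'_def)
    next
      case False
      show ?thesis
      proof (cases "y = v")
        case True
        then have "x = p" using nbr_v sym that x by blast
        then show ?thesis using True vA T.base_subset A' by (auto simp: par'_def)
      next
        case False
        then show ?thesis using T.adj_tree_vertex[of x y] T.par_mem[of x] that x \<open>x \<noteq> v\<close> A'
          by (auto simp: par'_def)
      qed
    qed
  qed (use step.prems T.base_subset A' sym irrefl in auto)
  then show ?case by blast
qed

context hanging_trees
begin

definition children :: "'a \<Rightarrow> 'a set" where
  "children x = {y \<in> V - W. par y = x}"

definition up :: "'a \<Rightarrow> 'a set" where
  "up x = (if x \<in> W then nbhd W E x else {par x})"

lemma children_subset: "children x \<subseteq> V - W"
  by (auto simp: children_def)

lemma finite_children: "finite (children x)"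
  using finite_V children_subset by (meson finite_Diff finite_subset)

lemma finite_up: "finite (up x)"
  using finite_V base_subset by (auto simp: up_def nbhd_def intro: finite_subset)

lemma mem_children_par: "x \<in> V - W \<Longrightarrow> x \<in> children (par x)"
  by (simp add: children_def)

lemma up_Int_children:
  assumes "x \<in> V"
  shows "up x \<inter> children x = {}"
proof -
  have "par x \<notin> children x" if "x \<in> V - W"
    using rk_less_par[of x] rk_less_par[of "par x"] that by (auto simp: children_def)
  then show ?thesis using assms by (auto simp: up_def nbhd_def children_def)
qed

lemma nbhd_eq_up_Un_children:
  assumes x: "x \<in> V"
  shows "nbhd V E x = up x \<union> children x"
proof (intro set_eqI iffI)
  fix y assume "y \<in> nbhd V E x"
  then have y: "y \<in> V" "E x y" by (auto simp: nbhd_def)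
  show "y \<in> up x \<union> children x"
  proof (cases "x \<in> W")
    case True
    then show ?thesis
      using x y adj_tree_vertex[of y x] sym[of x y] by (cases "y \<in> W") (auto simp: up_def nbhd_def children_def)
  next
    case False
    then show ?thesis using x y adj_tree_vertex[of x y] by (auto simp: up_def children_def)
  qed
next
  fix y assume "y \<in> up x \<union> children x"
  then show "y \<in> nbhd V E x"
    using x base_subset par_mem[of x] adj_par[of x] adj_par[of y] sym[of y x]
    by (auto simp: up_def nbhd_def children_def split: if_splits)
qed

lemma deg_eq_card_up_children:
  "x \<in> V \<Longrightarrow> deg V E x = card (up x) + card (children x)"
  unfolding deg_def nbhd_eq_up_Un_children
  using finite_up finite_children up_Int_children by (rule card_Un_disjoint)

lemma deg_tree_vertex: "x \<in> V - W \<Longrightarrow> deg V E x = Suc (card (children x))"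
  using deg_eq_card_up_children[of x] by (simp add: up_def)

lemma sum_nbhd_eq_up_children:
  "x \<in> V \<Longrightarrow> (\<Sum>y\<in>nbhd V E x. f y) = (\<Sum>y\<in>up x. f y) + (\<Sum>y\<in>children x. f y)"
  unfolding nbhd_eq_up_Un_children
  using finite_up finite_children up_Int_children by (rule sum.union_disjoint)

end

lemma gab_rhs_le_at_grandparent:
  fixes a b k Z :: int
  assumes "a + b - 1 = k" "b \<le> -1" "2 \<le> k" "Z = a*k + b - k^2 - k + 1"
  shows "a*Z + b - Z^2 \<le> Z + k - 1"
proof -
  have a: "a = k + 1 - b" using assms(1) by simp
  have "a*Z + b - Z^2 - (Z + k - 1) = (-b) * (k - 1) * (k - 2) * (1 + b)"
    unfolding assms(4) a by (simp add: algebra_simps power2_eq_square)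
  moreover have "(-b) * (k - 1) * (k - 2) * (1 + b) \<le> 0"
    using assms(2,3) by (intro mult_nonneg_nonpos mult_nonneg_nonneg) auto
  ultimately show ?thesis by simp
qed

locale gab_hanging_trees = hanging_trees +
  fixes a b :: int
  assumes gab: "v \<in> V \<Longrightarrow>
      (\<Sum>y\<in>nbhd V E v. int (deg V E y)) = a * int (deg V E v) + b - int (deg V E v) ^ 2"
    and base_deg_ge_2: "w \<in> W \<Longrightarrow> 2 \<le> deg W E w"
begin

abbreviation dg :: "'a \<Rightarrow> int" where
  "dg v \<equiv> int (deg V E v)"

lemma deg_ge_2:
  assumes "x \<in> V" "x \<in> W \<or> children x \<noteq> {}"
  shows "2 \<le> deg V E x"
proof (cases "x \<in> W")
  case True
  then show ?thesis
    using deg_eq_card_up_children[OF assms(1)] base_deg_ge_2[of x] by (simp add: up_def deg_def)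
next
  case False
  then show ?thesis
    using assms deg_tree_vertex[of x] finite_children[of x] card_gt_0_iff[of "children x"] by simp
qed

lemma deg_up_ge_2:
  assumes "x \<in> V" "y \<in> up x"
  shows "2 \<le> deg V E y"
proof (cases "x \<in> W")
  case True
  then show ?thesis using assms base_subset by (intro deg_ge_2) (auto simp: up_def nbhd_def)
next
  case False
  then show ?thesis
    using assms par_mem[of x] mem_children_par[of x] by (intro deg_ge_2) (auto simp: up_def)
qed

lemma card_up_ge_1: "x \<in> V \<Longrightarrow> 1 \<le> card (up x)"
  using base_deg_ge_2[of x] by (auto simp: up_def deg_def)

lemma sum_nbhd_ge:
  assumes "x \<in> V"
  shows "2 * int (card (up x)) + (\<Sum>y\<in>children x. dg y) \<le> (\<Sum>y\<in>nbhd V E x. dg y)"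
proof -
  have "(\<Sum>y\<in>up x. 2) \<le> (\<Sum>y\<in>up x. dg y)"
    using deg_up_ge_2[OF assms] by (intro sum_mono) auto
  then show ?thesis using sum_nbhd_eq_up_children[OF assms, of dg] by simp
qed

lemma sum_children_ge:
  assumes "y \<in> children x"
  shows "dg y + int (card (children x)) - 1 \<le> (\<Sum>z\<in>children x. dg z)"
proof -
  have "(\<Sum>z\<in>children x - {y}. 1) \<le> (\<Sum>z\<in>children x - {y}. dg z)"
    using children_subset deg_tree_vertex by (intro sum_mono) force
  moreover have "int (card (children x - {y})) = int (card (children x)) - 1"
  proof -
    have "0 < card (children x)" using assms finite_children[of x] card_gt_0_iff by blast
    then show ?thesis using assms finite_children[of x] by (simp add: card_Diff_singleton of_nat_diff)
  qed
  ultimately show ?thesis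
    using assms finite_children[of x] by (simp add: sum.remove)
qed

lemma dg_par_of_leaf:
  assumes "x \<in> V - W" "children x = {}"
  shows "dg (par x) = a + b - 1"
  using gab[of x] assms deg_tree_vertex[of x] sum_nbhd_eq_up_children[of x "\<lambda>y. dg y"]
  by (simp add: up_def)

lemma pendant_in_trees: "pendant V E p \<Longrightarrow> p \<in> V - W"
  using deg_ge_2[of p] base_subset by (auto simp: pendant_def)

lemma leaf_forces_b_neg:
  assumes x: "x \<in> V - W" "children x = {}"
  shows "b \<le> -1" and "2 \<le> a + b - 1"
proof -
  define k where "k = a + b - 1"
  have y: "par x \<in> V" and dg_y: "dg (par x) = k"
    using par_mem dg_par_of_leaf x by (auto simp: k_def)
  show k2: "2 \<le> a + b - 1"
    using deg_up_ge_2[of x "par x"] x dg_y by (simp add: up_def k_def)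
  have "int (card (children (par x))) \<le> (\<Sum>z\<in>children (par x). dg z)"
    using sum_children_ge[OF mem_children_par[OF x(1)]] deg_tree_vertex[OF x(1)] x(2) by simp
  then have "k + 1 \<le> (\<Sum>z\<in>nbhd V E (par x). dg z)"
    using sum_nbhd_ge[OF y] card_up_ge_1[OF y] deg_eq_card_up_children[OF y] dg_y by linarith
  moreover have "(\<Sum>z\<in>nbhd V E (par x). dg z) = k - b * (k - 1)"
    using gab[OF y] dg_y by (simp add: k_def algebra_simps power2_eq_square)
  ultimately have "b * (k - 1) < 0" by simp
  moreover have "0 \<le> b * (k - 1)" if "0 \<le> b"
    using that k2 by (simp add: k_def)
  ultimately show "b \<le> -1" by linarith
qed

lemma children_of_tree_vertex_empty:
  assumes "x \<in> V - W"
  shows "children x = {}"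
proof (rule ccontr)
  assume "children x \<noteq> {}"
  then obtain y where y: "y \<in> V - W" "children y \<noteq> {}"
    and y_min: "\<And>z. z \<in> V - W \<and> children z \<noteq> {} \<Longrightarrow> rk y \<le> rk z"
    using ex_has_least_nat[of "\<lambda>z. z \<in> V - W \<and> children z \<noteq> {}" x rk] assms by blast
  have grandchildless: "children c = {}" if "c \<in> children y" for c
  proof -
    have "c \<in> V - W" "par c = y" using that by (auto simp: children_def)
    then have "rk c < rk y" using rk_less_par y(1) by blast
    then show ?thesis using y_min[of c] \<open>c \<in> V - W\<close> by fastforce
  qed
  obtain c where c: "c \<in> children y" using y(2) by blast
  then have c_tree: "c \<in> V - W" and c_par: "par c = y" by (auto simp: children_def)
  define k where "k = a + b - 1"
  have b: "b \<le> -1" and k: "2 \<le> k"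
    using leaf_forces_b_neg[OF c_tree grandchildless[OF c]] by (simp_all add: k_def)
  have dg_y: "dg y = k"
    using dg_par_of_leaf[OF c_tree grandchildless[OF c]] c_par by (simp add: k_def)
  define z where "z = par y"
  have z: "z \<in> V" and y_child: "y \<in> children z"
    using par_mem y(1) mem_children_par y(1) by (auto simp: z_def)
  have "dg c = 1" if "c \<in> children y" for c
    using that children_subset grandchildless deg_tree_vertex[of c] by auto
  then have "(\<Sum>c\<in>children y. dg c) = int (card (children y))" by simp
  then have "(\<Sum>c\<in>nbhd V E y. dg c) = dg z + (k - 1)"
    using sum_nbhd_eq_up_children[of y dg] y(1) deg_tree_vertex[of y] dg_y
    by (simp add: up_def z_def)
  then have dg_z: "dg z = a * k + b - k^2 - k + 1"
    using gab[of y] y(1) dg_y by simp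
  have "dg z + k \<le> (\<Sum>c\<in>nbhd V E z. dg c)"
    using sum_nbhd_ge[OF z] sum_children_ge[OF y_child] card_up_ge_1[OF z]
      deg_eq_card_up_children[OF z] dg_y by linarith
  moreover have "(\<Sum>c\<in>nbhd V E z. dg c) \<le> dg z + k - 1"
    using gab[OF z] gab_rhs_le_at_grandparent[OF k_def[symmetric] b k dg_z] by simp
  ultimately show False by simp
qed

end

text \<open>
In the next two lemmas \<open>A\<close> is the number of neighbours of the hub of degree \<open>2\<close> (the others
have degree \<open>k\<close>), and \<open>d\<close> is the degree of the second base neighbour of such a neighbour.
\<close>

lemma hub_of_degree_k_impossible:
  fixes a b k A :: int
  assumes k: "a + b - 1 = k" "b \<le> -1" "7 \<le> k" and A: "0 \<le> A" "A \<le> 6"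
    and hub: "2*A + k*(6 - A) = a*k + b - k^2 - k + 6"
    and two: "0 < A \<Longrightarrow> \<exists>d\<in>{2, k}. k + d = 2*a + b - 4"
    and big: "A < 6 \<Longrightarrow> \<exists>d\<in>{2, k}. k + d = a*k + b - k^2 - k + 2"
  shows False
proof -
  define \<beta> where "\<beta> = -b"
  have a: "a = k + 1 + \<beta>" and \<beta>: "1 \<le> \<beta>" using k by (simp_all add: \<beta>_def)
  have two_eq: "2*a + b - 4 = 2*k - 2 + \<beta>" and big_eq: "a*k + b - k^2 - k + 2 = \<beta> * (k - 1) + 2"
    unfolding a \<beta>_def by (simp_all add: algebra_simps power2_eq_square)
  have "\<beta> = 2"
  proof (cases "0 < A")
    case True
    then obtain d where "d \<in> {2, k}" "k + d = 2*k - 2 + \<beta>" using two unfolding two_eq by blast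
    then show ?thesis using k(3) \<beta> by auto
  next
    case False
    then have "A < 6" using A by simp
    then obtain d where d: "d \<in> {2, k}" "k + d = \<beta> * (k - 1) + 2"
      using big unfolding big_eq by blast
    show ?thesis
    proof (rule ccontr)
      assume "\<beta> \<noteq> 2"
      then consider "\<beta> = 1" | "3 \<le> \<beta>" using \<beta> by linarith
      then show False
      proof cases
        case 2
        then have "3 * (k - 1) \<le> \<beta> * (k - 1)" using k(3) by (intro mult_right_mono) auto
        then show False using d k(3) by auto
      qed (use d k(3) in auto)
    qed
  qed
  then have "2*A + k*(6 - A) = 2*k + 4"
    using hub unfolding a \<beta>_def by (simp add: algebra_simps power2_eq_square)
  moreover have "A \<in> {0, 1, 2, 3, 4, 5, 6}" using A by auto
  ultimately show False using k(3) by auto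
qed

lemma hub_of_degree_6_impossible:
  fixes a b k A n_two n_k :: int
  assumes k: "a + b - 1 = k" "b \<le> -1" "3 \<le> k" and A: "0 \<le> A" "A \<le> 6"
    and hub: "2*A + k*(6 - A) = 6*a + b - 36"
    and two: "0 < A \<Longrightarrow> \<exists>d\<in>{2, k}. 6 + d = 2*a + b - 4"
    and big: "A < 6 \<Longrightarrow> \<exists>d\<in>{2, k}. 6 + d = a*k + b - k^2 - k + 2"
    and global: "n_two * (2*a + b - 8) + n_k * (a*k + b - k^2 - 3*k + 2) + (6*a + b - 72) = 0"
  shows False
proof -
  define \<beta> where "\<beta> = -b"
  have a: "a = k + 1 + \<beta>" and \<beta>: "1 \<le> \<beta>" using k by (simp_all add: \<beta>_def)
  have two_eq: "2*a + b - 4 = 2*k - 2 + \<beta>" and big_eq: "a*k + b - k^2 - k + 2 = \<beta> * (k - 1) + 2"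
    and hub_eq: "6*a + b - 36 = 6*k + 5*\<beta> - 30"
    and global_eq: "n_two * (2*a + b - 8) + n_k * (a*k + b - k^2 - 3*k + 2) + (6*a + b - 72)
                    = n_two * (2*k - 6 + \<beta>) + n_k * ((\<beta> - 2) * (k - 1)) + (6*k + 5*\<beta> - 66)"
    unfolding a \<beta>_def by (simp_all add: algebra_simps power2_eq_square)
  have hub': "2*A + k*(6 - A) = 6*k + 5*\<beta> - 30" using hub hub_eq by simp
  consider "A = 0" | "A = 5" | "0 < A" "A \<noteq> 5" using A by linarith
  then show False
  proof cases
    case 1
    then have "\<beta> = 6" using hub' by simp
    moreover obtain d where "d \<in> {2, k}" "6 + d = \<beta> * (k - 1) + 2"
      using big 1 unfolding big_eq by auto
    ultimately show False using k(3) by auto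
  next
    case 2
    then have "k + \<beta> = 8" using hub' by simp
    then have "k \<in> {3, 4, 5, 6, 7}" using k(3) \<beta> by auto
    moreover obtain d where "d \<in> {2, k}" "6 + d = \<beta> * (k - 1) + 2"
      using big 2 unfolding big_eq by auto
    moreover have "n_two * (2*k - 6 + \<beta>) + n_k * ((\<beta> - 2) * (k - 1)) + (6*k + 5*\<beta> - 66) = 0"
      using global global_eq by simp
    ultimately show False using \<open>k + \<beta> = 8\<close> by auto presburger+
  next
    case 3
    then obtain d where "d \<in> {2, k}" "6 + d = 2*k - 2 + \<beta>"
      using two unfolding two_eq by blast
    moreover have "A \<in> {1, 2, 3, 4, 6}" using 3 A by auto
    ultimately show False using hub' k(3) by auto
  qed
qed

locale gab_bouquet = gab_hanging_trees +
  fixes u :: 'a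
  assumes hub_mem: "u \<in> W" and deg_hub: "deg W E u = 6"
    and deg_non_hub: "w \<in> W \<Longrightarrow> w \<noteq> u \<Longrightarrow> deg W E w = 2"
    and has_pendant: "\<exists>p. pendant V E p"
begin

definition k :: int where
  "k = a + b - 1"

lemma dg_base_vertex:
  assumes w: "w \<in> W"
  shows "dg w = int (deg W E w) \<or> (children w \<noteq> {} \<and> dg w = k)"
proof (cases "children w = {}")
  case True
  then show ?thesis using w base_subset deg_eq_card_up_children[of w] by (auto simp: up_def deg_def)
next
  case False
  then obtain c where "c \<in> children w" by blast
  then have "c \<in> V - W" "par c = w" by (auto simp: children_def)
  then show ?thesis
    using False dg_par_of_leaf children_of_tree_vertex_empty by (auto simp: k_def)
qed

lemma b_neg: "b \<le> -1" and k_ge_3: "3 \<le> k"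
proof -
  obtain x where x: "x \<in> V - W" using has_pendant pendant_in_trees by blast
  have leaf: "children x = {}" using children_of_tree_vertex_empty[OF x] .
  show "b \<le> -1" using leaf_forces_b_neg[OF x leaf] by simp
  have "par x \<in> W"
    using x par_mem[OF x] children_of_tree_vertex_empty[of "par x"] mem_children_par[OF x] by blast
  moreover have "dg (par x) = k"
    using dg_par_of_leaf[OF x leaf] by (simp add: k_def)
  moreover have "3 \<le> deg V E (par x)"
    using deg_eq_card_up_children[of "par x"] base_deg_ge_2[OF \<open>par x \<in> W\<close>] base_subset
      mem_children_par[OF x] finite_children card_gt_0_iff[of "children (par x)"] \<open>par x \<in> W\<close>
    by (auto simp: up_def deg_def)
  ultimately show "3 \<le> k" by simp
qed

lemma dg_non_hub: "w \<in> W \<Longrightarrow> w \<noteq> u \<Longrightarrow> dg w = 2 \<or> dg w = k"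
  using dg_base_vertex deg_non_hub by fastforce

lemma dg_hub: "dg u = 6 \<or> (dg u = k \<and> 7 \<le> k)"
proof -
  have "dg u = 6 + int (card (children u))"
    using deg_eq_card_up_children[of u] hub_mem base_subset deg_hub by (auto simp: up_def deg_def)
  then show ?thesis
    using dg_base_vertex[OF hub_mem] deg_hub finite_children card_gt_0_iff[of "children u"] by auto
qed

lemma base_equation:
  assumes w: "w \<in> W"
  shows "(\<Sum>y\<in>nbhd W E w. dg y) = a * dg w + b - (dg w)^2 - dg w + int (deg W E w)"
proof -
  have wV: "w \<in> V" using w base_subset by blast
  have "dg c = 1" if "c \<in> children w" for c
    using that children_subset children_of_tree_vertex_empty deg_tree_vertex by fastforce
  then have "(\<Sum>y\<in>nbhd V E w. dg y) = (\<Sum>y\<in>nbhd W E w. dg y) + int (card (children w))"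
    using sum_nbhd_eq_up_children[OF wV, of dg] w by (simp add: up_def)
  moreover have "dg w = int (deg W E w) + int (card (children w))"
    using deg_eq_card_up_children[OF wV] w by (simp add: up_def deg_def)
  ultimately show ?thesis using gab[OF wV] by linarith
qed

lemma hub_neighbour_equation:
  assumes v: "v \<in> nbhd W E u"
  shows "\<exists>d\<in>{2, k}. dg u + d = a * dg v + b - (dg v)^2 - dg v + 2"
proof -
  have vW: "v \<in> W" and "v \<noteq> u" and u_nbr: "u \<in> nbhd W E v"
    using v irrefl sym hub_mem by (auto simp: nbhd_def)
  then have "card (nbhd W E v) = 2" using deg_non_hub by (simp add: deg_def)
  then obtain w where w: "nbhd W E v = {u, w}" "w \<noteq> u"
    using u_nbr by (auto simp: card_2_iff) (metis insert_commute)
  then have "w \<in> W" by (auto simp: nbhd_def)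
  have "dg u + dg w = a * dg v + b - (dg v)^2 - dg v + 2"
    using base_equation[OF vW] w deg_non_hub[OF vW \<open>v \<noteq> u\<close>] by simp
  then show ?thesis using dg_non_hub[OF \<open>w \<in> W\<close> w(2)] by auto
qed

lemma hub_neighbour_count:
  obtains A where "0 \<le> A" "A \<le> 6"
    and "2 * A + k * (6 - A) = a * dg u + b - (dg u)^2 - dg u + 6"
    and "0 < A \<Longrightarrow> \<exists>d\<in>{2, k}. dg u + d = 2 * a + b - 4"
    and "A < 6 \<Longrightarrow> \<exists>d\<in>{2, k}. dg u + d = a * k + b - k^2 - k + 2"
proof
  let ?N = "nbhd W E u"
  define A where "A = int (card {v\<in>?N. dg v = 2})"
  have fin: "finite ?N" using finite_V base_subset by (auto simp: nbhd_def intro: finite_subset)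
  have vals: "\<forall>v\<in>?N. dg v = 2 \<or> dg v = k"
    using dg_non_hub irrefl by (auto simp: nbhd_def)
  have card_N: "int (card {v\<in>?N. dg v \<noteq> 2}) = 6 - A"
    using sum_two_valued[OF fin vals, of "\<lambda>_. 1 :: int"] deg_hub by (simp add: A_def deg_def)
  then show "0 \<le> A" "A \<le> 6" by (simp_all add: A_def)
  show "2 * A + k * (6 - A) = a * dg u + b - (dg u)^2 - dg u + 6"
    using sum_two_valued[OF fin vals, of "\<lambda>d. d"] card_N base_equation[OF hub_mem] deg_hub
    by (simp add: A_def)
  show "\<exists>d\<in>{2, k}. dg u + d = 2 * a + b - 4" if "0 < A"
  proof -
    have "{v\<in>?N. dg v = 2} \<noteq> {}" using that unfolding A_def by (metis card.empty of_nat_0 less_irrefl)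
    then obtain v where "v \<in> ?N" "dg v = 2" by blast
    then show ?thesis using hub_neighbour_equation[of v] by (simp add: mult.commute)
  qed
  show "\<exists>d\<in>{2, k}. dg u + d = a * k + b - k^2 - k + 2" if "A < 6"
  proof -
    have "{v\<in>?N. dg v \<noteq> 2} \<noteq> {}" using that card_N by (metis card.empty of_nat_0 diff_gt_0_iff_gt less_irrefl)
    then obtain v where "v \<in> ?N" "dg v \<noteq> 2" by blast
    then show ?thesis using hub_neighbour_equation[of v] vals by force
  qed
qed

lemma degree_count_identity:
  obtains n_two n_k :: int where "0 \<le> n_two" "0 \<le> n_k"
    and "n_two * (2 * a + b - 8) + n_k * (a * k + b - k^2 - 3 * k + 2)
           + (a * dg u + b - (dg u)^2 - 7 * dg u + 6) = 0"
proof -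
  define F where
    "F w = a * dg w + b - (dg w)^2 - dg w + int (deg W E w) - int (deg W E w) * dg w" for w
  define h where "h d = a * d + b - d^2 - 3 * d + 2" for d :: int
  define n_two where "n_two = int (card {w\<in>W - {u}. dg w = 2})"
  define n_k where "n_k = int (card {w\<in>W - {u}. dg w \<noteq> 2})"
  have finW: "finite W" using finite_V base_subset by (rule finite_subset[rotated])
  have "(\<Sum>w\<in>W. \<Sum>x\<in>nbhd W E w. dg x) = (\<Sum>x\<in>W. int (deg W E x) * dg x)"
    using finW sym by (rule sum_nbhd_swap)
  then have "(\<Sum>w\<in>W. F w) = 0"
    using base_equation by (simp add: F_def sum_subtractf)
  moreover have "(\<Sum>w\<in>W. F w) = F u + (\<Sum>w\<in>W - {u}. h (dg w))"
    using finW hub_mem deg_non_hub by (simp add: sum.remove F_def h_def algebra_simps)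
  moreover have "(\<Sum>w\<in>W - {u}. h (dg w)) = h 2 * n_two + h k * n_k"
    using sum_two_valued[of "W - {u}" dg 2 k h] finW dg_non_hub by (simp add: n_two_def n_k_def)
  ultimately have "n_two * (2 * a + b - 8) + n_k * (a * k + b - k^2 - 3 * k + 2)
                     + (a * dg u + b - (dg u)^2 - 7 * dg u + 6) = 0"
    using deg_hub by (simp add: F_def h_def algebra_simps)
  then show ?thesis using that[of n_two n_k] by (simp add: n_two_def n_k_def)
qed

lemma inconsistent: False
proof -
  obtain A where A: "0 \<le> A" "A \<le> 6"
    and hub: "2 * A + k * (6 - A) = a * dg u + b - (dg u)^2 - dg u + 6"
    and two: "0 < A \<Longrightarrow> \<exists>d\<in>{2, k}. dg u + d = 2 * a + b - 4"
    and big: "A < 6 \<Longrightarrow> \<exists>d\<in>{2, k}. dg u + d = a * k + b - k^2 - k + 2"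
    using hub_neighbour_count by blast
  obtain n_two n_k where
    global: "n_two * (2 * a + b - 8) + n_k * (a * k + b - k^2 - 3 * k + 2)
               + (a * dg u + b - (dg u)^2 - 7 * dg u + 6) = 0"
    using degree_count_identity by blast
  have k: "a + b - 1 = k" by (simp add: k_def)
  from dg_hub show False
  proof
    assume hub6: "dg u = 6"
    show False
    proof (rule hub_of_degree_6_impossible[OF k b_neg k_ge_3 A, where n_two = n_two and n_k = n_k])
      show "2 * A + k * (6 - A) = 6 * a + b - 36" using hub hub6 by simp
      show "\<exists>d\<in>{2, k}. 6 + d = 2 * a + b - 4" if "0 < A" using two[OF that] hub6 by simp
      show "\<exists>d\<in>{2, k}. 6 + d = a * k + b - k^2 - k + 2" if "A < 6" using big[OF that] hub6 by simp
      show "n_two * (2 * a + b - 8) + n_k * (a * k + b - k^2 - 3 * k + 2) + (6 * a + b - 72) = 0"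
        using global hub6 by simp
    qed
  next
    assume "dg u = k \<and> 7 \<le> k"
    then have hubk: "dg u = k" and "7 \<le> k" by simp_all
    show False
    proof (rule hub_of_degree_k_impossible[OF k b_neg \<open>7 \<le> k\<close> A])
      show "2 * A + k * (6 - A) = a * k + b - k^2 - k + 6" using hub hubk by simp
      show "\<exists>d\<in>{2, k}. k + d = 2 * a + b - 4" if "0 < A" using two[OF that] hubk by simp
      show "\<exists>d\<in>{2, k}. k + d = a * k + b - k^2 - k + 2" if "A < 6" using big[OF that] hubk by simp
    qed
  qed
qed

end

theorem proposition2:
  fixes V :: "'a set" and E :: "'a \<Rightarrow> 'a \<Rightarrow> bool" and W :: "'a set"
    and u :: 'a and c1 c2 c3 :: "'a list"
  assumes "tricyclic V E"
    and "\<exists>v. pendant V E v"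
    and "is_base V E W"
    and "is_cycle_list c1" and "is_cycle_list c2" and "is_cycle_list c3"
    and "set c1 \<inter> set c2 = {u}" and "set c1 \<inter> set c3 = {u}" and "set c2 \<inter> set c3 = {u}"
    and "W = set c1 \<union> set c2 \<union> set c3"
    and "edges W E = cycle_edges c1 \<union> cycle_edges c2 \<union> cycle_edges c3"
  shows "\<forall>a b. \<not> in_Gab V E a b"
proof (intro allI notI)
  fix a b assume gab: "in_Gab V E a b"
  have finite: "finite V" and sym: "\<And>x y. E x y \<Longrightarrow> E y x" and irrefl: "\<And>x. \<not> E x x"
    using assms(1) by (auto simp: tricyclic_def simple_graph_def)
  have base_deg: "w \<in> W \<Longrightarrow> deg W E w = (if w = u then 6 else 2)" for w
    using deg_three_cycles_one_common_vertex[OF sym assms(4-11)] by blast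
  have "(prune_step E)\<^sup>*\<^sup>* V W" using assms(3) by (simp add: is_base_def)
  then obtain par rk where "hanging_trees V E W par rk"
    using pruning_hangs_trees[OF _ finite] irrefl sym by metis
  then interpret hanging_trees V E W par rk .
  interpret gab_bouquet V E W par rk a b u
  proof
    show "(\<Sum>y\<in>nbhd V E v. int (deg V E y)) = a * int (deg V E v) + b - int (deg V E v) ^ 2"
      if "v \<in> V" for v
      using gab that by (simp add: in_Gab_def)
    show "2 \<le> deg W E w" if "w \<in> W" for w
      using base_deg[OF that] by simp
    show "u \<in> W" using assms(7,10) by blast
    then show "deg W E u = 6" using base_deg by simp
    show "deg W E w = 2" if "w \<in> W" "w \<noteq> u" for w
      using base_deg that by simp
  qed (fact assms(2))
  show False by (rule inconsistent)
qed

end
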